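(* Let $w:=3/\sqrt{2}$, and for $t\in[0,w]$ put $x:=-t+wi$. Define $M(q,t):=|(1+qx)(1+q/x)|$ and $M_0(q,t):=(1-q)M(q,t)$. Then: for each fixed $q\in[0.6,1]$, the functions $t\mapsto M(q,t)$ and $t\mapsto M_0(q,t)$ on $[0,w]$ attain their maximum at $t=0$; and for each fixed $q\in[0.6,0.75]$, the functions $t\mapsto M(q,t)$ and $t\mapsto M_0(q,t)$ on $[1,w]$ attain their maximum at $t=1$. *)

theory Defs
  imports "HOL-Analysis.Analysis"
begin

definition w4 :: real where "w4 = 3 / sqrt 2"

definition xpt :: "real \<Rightarrow> complex" where
  "xpt t = Complex (- t) w4"

definition Mf :: "real \<Rightarrow> real \<Rightarrow> real" where
  "Mf q t = cmod ((1 + of_real q * xpt t) * (1 + of_real q / xpt t))"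

definition M0f :: "real \<Rightarrow> real \<Rightarrow> real" where
  "M0f q t = (1 - q) * Mf q t"

end

theory Submission
  imports Defs
begin

text \<open>
  Since \<open>|x|\<^sup>2 = t\<^sup>2 + w\<^sup>2\<close> and \<open>1 + q/x = (x + q)/x\<close>, the square \<open>M(q,t)\<^sup>2\<close> is the rational
  function \<open>N(q,t) / (t\<^sup>2 + 9/2)\<close> with \<open>N(q,t) = |1 + qx|\<^sup>2 |x + q|\<^sup>2\<close> a polynomial.
  Comparing \<open>t\<close> with \<open>t\<^sub>0 \<in> {0, 1}\<close> after clearing denominators, the difference factors as
  \<open>(t - t\<^sub>0) q ((1 + q\<^sup>2) B(t) - q A(t))\<close>. The last factor is nonnegative because
  \<open>c q \<le> 1 + q\<^sup>2\<close> (with \<open>c = 2\<close>, resp. \<open>c = 25/12\<close> on \<open>[0.6, 0.75]\<close>) and \<open>A \<le> c B\<close> on the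
  range of \<open>t\<close>; the cubic term of \<open>A\<close> is controlled by \<open>t\<^sup>2 \<le> w\<^sup>2 = 9/2\<close>.
  Finally \<open>M\<^sub>0 = (1 - q) M\<close> with \<open>1 - q \<ge> 0\<close> has its maximum at the same place.
\<close>

lemma w4_squared: "w4\<^sup>2 = 9/2"
  unfolding w4_def by (simp add: power_divide)

lemma square_le_w4_squared: "t \<in> {0..w4} \<Longrightarrow> t\<^sup>2 \<le> 9/2"
  using power_mono[of t w4 2] w4_squared by simp

lemma norm_one_plus_mult_one_plus_divide:
  fixes a x :: "'a :: real_normed_field"
  assumes "x \<noteq> 0"
  shows "norm ((1 + a * x) * (1 + a / x)) = norm (1 + a * x) * norm (x + a) / norm x"
proof -
  have "1 + a / x = (x + a) / x" using assms by (simp add: field_simps)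
  then show ?thesis by (simp add: norm_mult norm_divide)
qed

definition Mf_numerator :: "real \<Rightarrow> real \<Rightarrow> real" where
  "Mf_numerator q t = ((1 - q * t)\<^sup>2 + 9/2 * q\<^sup>2) * ((q - t)\<^sup>2 + 9/2)"

lemma Mf_squared: "(Mf q t)\<^sup>2 = Mf_numerator q t / (t\<^sup>2 + 9/2)"
proof -
  have "xpt t \<noteq> 0" using w4_squared by (auto simp: xpt_def complex_eq_iff)
  then have "Mf q t = cmod (1 + of_real q * xpt t) * cmod (xpt t + of_real q) / cmod (xpt t)"
    unfolding Mf_def by (rule norm_one_plus_mult_one_plus_divide)
  also have "\<dots> = cmod (Complex (1 - q * t) (q * w4)) * cmod (Complex (q - t) w4)
                   / cmod (Complex (- t) w4)"
  proof -
    have "1 + of_real q * xpt t = Complex (1 - q * t) (q * w4)"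
      and "xpt t + of_real q = Complex (q - t) w4"
      by (simp_all add: xpt_def complex_eq_iff)
    then show ?thesis by (simp add: xpt_def)
  qed
  finally show ?thesis
    by (simp add: Mf_numerator_def cmod_power2 power_divide power_mult_distrib w4_squared)
qed

lemma Mf_le_Mf_iff:
  "Mf q t \<le> Mf q s \<longleftrightarrow> Mf_numerator q t * (s\<^sup>2 + 9/2) \<le> Mf_numerator q s * (t\<^sup>2 + 9/2)"
proof -
  have "0 < t\<^sup>2 + 9/2" "0 < s\<^sup>2 + 9/2" by (simp_all add: add_nonneg_pos)
  have "Mf q t \<le> Mf q s \<longleftrightarrow> (Mf q t)\<^sup>2 \<le> (Mf q s)\<^sup>2"
    by (simp add: Mf_def abs_le_square_iff[symmetric])
  also have "\<dots> \<longleftrightarrow> Mf_numerator q t * (s\<^sup>2 + 9/2) \<le> Mf_numerator q s * (t\<^sup>2 + 9/2)"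
    unfolding Mf_squared using \<open>0 < t\<^sup>2 + 9/2\<close> \<open>0 < s\<^sup>2 + 9/2\<close> by (simp add: field_simps)
  finally show ?thesis .
qed

lemma Mf_numerator_cross_diff_0:
  "Mf_numerator q 0 * (t\<^sup>2 + 9/2) - Mf_numerator q t * (0\<^sup>2 + 9/2)
     = t * q * ((1 + q\<^sup>2) * (9 * t\<^sup>2 + 99/2) - q * (t * (9/2 * t\<^sup>2 + 149/4)))"
  unfolding Mf_numerator_def by (simp add: field_simps power2_eq_square)

lemma Mf_numerator_cross_diff_1:
  "Mf_numerator q 1 * (t\<^sup>2 + 9/2) - Mf_numerator q t * (1\<^sup>2 + 9/2)
     = (t - 1) * q * ((1 + q\<^sup>2) * (11 * t\<^sup>2 - 2 * t + 117/2) - q * ((t + 1) * (11/2 * t\<^sup>2 + 167/4)))"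
  unfolding Mf_numerator_def by (simp add: field_simps power2_eq_square)

lemma mult_le_one_plus_square_mult:
  fixes q a b c :: real
  assumes "c * q \<le> 1 + q\<^sup>2" and "0 \<le> a" and "a \<le> c * b" and "0 < c"
  shows "q * a \<le> (1 + q\<^sup>2) * b"
proof -
  have "c * (q * a) \<le> (1 + q\<^sup>2) * a"
    using mult_right_mono[OF assms(1,2)] by (simp add: mult.assoc)
  also have "\<dots> \<le> (1 + q\<^sup>2) * (c * b)"
    using assms(3) by (intro mult_left_mono) auto
  finally show ?thesis using assms(4) by (simp add: mult.left_commute)
qed

lemma cube_le_of_square_le:
  fixes t r :: real
  assumes "0 \<le> t" and "t\<^sup>2 \<le> r"
  shows "t ^ 3 \<le> r * t"
  using mult_right_mono[OF assms(2,1)] by (simp add: power2_eq_square power3_eq_cube)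

lemma cubic_bound_0:
  fixes t :: real
  assumes "0 \<le> t" and "t\<^sup>2 \<le> 9/2"
  shows "t * (9/2 * t\<^sup>2 + 149/4) \<le> 2 * (9 * t\<^sup>2 + 99/2)"
proof -
  have "t ^ 3 \<le> 9/2 * t" using cube_le_of_square_le[OF assms] .
  moreover have "0 \<le> 18 * (t - 8/5)\<^sup>2" by simp
  ultimately show ?thesis using assms(1) by (simp add: power2_eq_square power3_eq_cube algebra_simps)
qed

lemma cubic_bound_1:
  fixes t :: real
  assumes "0 \<le> t" and "t\<^sup>2 \<le> 9/2"
  shows "(t + 1) * (11/2 * t\<^sup>2 + 167/4) \<le> 25/12 * (11 * t\<^sup>2 - 2 * t + 117/2)"
proof -
  have "t ^ 3 \<le> 9/2 * t" using cube_le_of_square_le[OF assms] .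
  moreover have "0 \<le> (t - 203/100)\<^sup>2" by simp
  moreover have "(t + 1) * (11/2 * t\<^sup>2 + 167/4) = 11/2 * t ^ 3 + 11/2 * t\<^sup>2 + 167/4 * t + 167/4"
    and "(t - 203/100)\<^sup>2 = t\<^sup>2 - 203/50 * t + 41209/10000"
    by (simp_all add: power2_eq_square power3_eq_cube field_simps)
  ultimately show ?thesis using assms(1) by (simp add: algebra_simps)
qed

lemma Mf_le_Mf_0:
  fixes q t :: real
  assumes "0 \<le> q" and t: "t \<in> {0..w4}"
  shows "Mf q t \<le> Mf q 0"
proof -
  have "2 * q \<le> 1 + q\<^sup>2" using zero_le_power2[of "q - 1"] by (simp add: power2_eq_square algebra_simps)
  with cubic_bound_0 have "q * (t * (9/2 * t\<^sup>2 + 149/4)) \<le> (1 + q\<^sup>2) * (9 * t\<^sup>2 + 99/2)"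
    using t square_le_w4_squared[OF t] by (intro mult_le_one_plus_square_mult[where c = 2]) auto
  then have "0 \<le> t * q * ((1 + q\<^sup>2) * (9 * t\<^sup>2 + 99/2) - q * (t * (9/2 * t\<^sup>2 + 149/4)))"
    using assms by simp
  then show ?thesis
    unfolding Mf_le_Mf_iff using Mf_numerator_cross_diff_0[of q t] by simp
qed

lemma Mf_le_Mf_1:
  fixes q t :: real
  assumes q: "q \<in> {0.6..0.75}" and t: "t \<in> {1..w4}"
  shows "Mf q t \<le> Mf q 1"
proof -
  have "0 \<le> (3 - 4 * q) * (4 - 3 * q)" using q by (intro mult_nonneg_nonneg) auto
  then have "25/12 * q \<le> 1 + q\<^sup>2" by (simp add: power2_eq_square algebra_simps)
  with cubic_bound_1 have "q * ((t + 1) * (11/2 * t\<^sup>2 + 167/4)) \<le> (1 + q\<^sup>2) * (11 * t\<^sup>2 - 2 * t + 117/2)"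
    using t square_le_w4_squared[of t] by (intro mult_le_one_plus_square_mult[where c = "25/12"]) auto
  then have "0 \<le> (t - 1) * q * ((1 + q\<^sup>2) * (11 * t\<^sup>2 - 2 * t + 117/2)
                                   - q * ((t + 1) * (11/2 * t\<^sup>2 + 167/4)))"
    using q t by simp
  then show ?thesis
    unfolding Mf_le_Mf_iff using Mf_numerator_cross_diff_1[of q t] by simp
qed

lemma M0f_le_M0f: "q \<le> 1 \<Longrightarrow> Mf q t \<le> Mf q s \<Longrightarrow> M0f q t \<le> M0f q s"
  unfolding M0f_def by (simp add: mult_left_mono)

theorem lemma4:
  shows "(\<forall>q\<in>{0.6..1::real}. \<forall>t\<in>{0..w4}.
            Mf q t \<le> Mf q 0 \<and> M0f q t \<le> M0f q 0)
       \<and> (\<forall>q\<in>{0.6..0.75::real}. \<forall>t\<in>{1..w4}.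
            Mf q t \<le> Mf q 1 \<and> M0f q t \<le> M0f q 1)"
  using Mf_le_Mf_0 Mf_le_Mf_1 M0f_le_M0f by auto

end
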